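(* $L_1(z)=R(z,1)$, where $L_1(z)$ is the coefficient of $x^1$ in $L(z,x)$.
   Context: Formulas are built from atoms by a binary product: every formula is an atom or $A\bullet B$. A context is a finite (possibly empty) list of formulas; commas denote concatenation; its length is its number of formulas. Size: $|p|=0$, $|A\bullet B|=1+|A|+|B|$. Frontier: $\mathrm{fr}(p)=p$, $\mathrm{fr}(A\bullet B)=\mathrm{fr}(A),\mathrm{fr}(B)$. A context is irreducible if its leftmost formula is not a product (it is empty or begins with an atom). A focused derivation is a finite derivation tree with no undischarged premises using only: ($\bullet L$) from $A,B,\Delta\vdash C$ infer $A\bullet B,\Delta\vdash C$; ($\bullet R^{foc}$) from $\Gamma\vdash A$ and $\Delta\vdash B$ infer $\Gamma,\Delta\vdash A\bullet B$ with $\Gamma$ irreducible; ($id^{atm}$) $p\vdash p$ for atoms $p$. For each $n$ fix the frontier $p_0,\dots,p_n$ of distinct atoms. Let $\ell_{n,k}$ (resp. $r_{n,k}$) be the number of focused derivations of sequents $\Gamma\vdash B$ with $|B|=n$, $\mathrm{fr}(B)=p_0,\dots,p_n$, and $\Gamma$ a context (resp. an irreducible context) of length $k$. $L(z,x)=\sum_{n,k}\ell_{n,k}z^nx^k$ and $R(z,x)=\sum_{n,k}r_{n,k}z^nx^k$ (formal power series). *)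

theory Defs
  imports Complex_Main
begin

datatype frm = At nat | Prod frm frm

fun fsize :: "frm \<Rightarrow> nat" where
  "fsize (At p) = 0"
| "fsize (Prod A B) = 1 + fsize A + fsize B"

fun fr :: "frm \<Rightarrow> nat list" where
  "fr (At p) = [p]"
| "fr (Prod A B) = fr A @ fr B"

definition irreducible :: "frm list \<Rightarrow> bool" where
  "irreducible \<Gamma> \<longleftrightarrow> \<Gamma> = [] \<or> (\<exists>p. hd \<Gamma> = At p)"

text \<open>Focused derivation trees; the conclusion of each rule instance is
  determined by its premises, so trees are exactly derivations.
  LeftP d: from A,B,Delta |- C infer A*B,Delta |- C.
  RightP d1 d2: from Gamma |- A and Delta |- B infer Gamma,Delta |- A*B.\<close>
datatype deriv = Ident nat | LeftP deriv | RightP deriv deriv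

fun concl :: "deriv \<Rightarrow> frm list \<times> frm" where
  "concl (Ident p) = ([At p], At p)"
| "concl (LeftP d) = (case concl d of (\<Gamma>, C) \<Rightarrow>
      (Prod (\<Gamma> ! 0) (\<Gamma> ! 1) # drop 2 \<Gamma>, C))"
| "concl (RightP d1 d2) = (case (concl d1, concl d2) of ((\<Gamma>, A), (\<Delta>, B)) \<Rightarrow>
      (\<Gamma> @ \<Delta>, Prod A B))"

fun valid :: "deriv \<Rightarrow> bool" where
  "valid (Ident p) = True"
| "valid (LeftP d) = (valid d \<and> 2 \<le> length (fst (concl d)))"
| "valid (RightP d1 d2) = (valid d1 \<and> valid d2 \<and> irreducible (fst (concl d1)))"

definition ell :: "nat \<Rightarrow> nat \<Rightarrow> nat" where
  "ell n k = card {d. valid d \<and> fsize (snd (concl d)) = n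
      \<and> fr (snd (concl d)) = [0..<Suc n] \<and> length (fst (concl d)) = k}"

definition rr :: "nat \<Rightarrow> nat \<Rightarrow> nat" where
  "rr n k = card {d. valid d \<and> fsize (snd (concl d)) = n
      \<and> fr (snd (concl d)) = [0..<Suc n] \<and> length (fst (concl d)) = k
      \<and> irreducible (fst (concl d))}"

end

theory Submission
  imports Defs
begin

text \<open>Applying the left rule to an irreducible antecedent until a single formula remains is
  a bijection, preserving the succedent, onto the derivations whose antecedent has length one.
  Its inverse strips the left rules at the root: a derivation not ending in the left rule has an
  irreducible antecedent, because the right rule demands an irreducible left premise. Summing
  r n k over k therefore counts every derivation with irreducible antecedent exactly once.\<close>

abbreviation antecedent :: "deriv \<Rightarrow> frm list" where
  "antecedent d \<equiv> fst (concl d)"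

abbreviation succedent :: "deriv \<Rightarrow> frm" where
  "succedent d \<equiv> snd (concl d)"

fun atoms :: "deriv \<Rightarrow> nat set" where
  "atoms (Ident p) = {p}"
| "atoms (LeftP d) = atoms d"
| "atoms (RightP d1 d2) = atoms d1 \<union> atoms d2"

lemma atoms_subset_fr_succedent: "atoms d \<subseteq> set (fr (succedent d))"
  by (induction d) (auto split: prod.splits)

lemma antecedent_nonempty: "valid d \<Longrightarrow> antecedent d \<noteq> []"
  by (induction d) (auto split: prod.splits)

lemma size_antecedent_bound:
  "valid d \<Longrightarrow> size d + length (antecedent d) < 3 * length (fr (succedent d))"
  by (induction d) (auto split: prod.splits)

lemma finite_size_atoms: "finite A \<Longrightarrow> finite {d. size d \<le> N \<and> atoms d \<subseteq> A}"
proof (induction N)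
  case 0
  have "{d. size d \<le> 0 \<and> atoms d \<subseteq> A} \<subseteq> Ident ` A"
  proof
    fix d assume "d \<in> {d. size d \<le> 0 \<and> atoms d \<subseteq> A}"
    then show "d \<in> Ident ` A" by (cases d) auto
  qed
  then show ?case using "0.prems" finite_subset by blast
next
  case (Suc N)
  let ?B = "{d. size d \<le> N \<and> atoms d \<subseteq> A}"
  have "{d. size d \<le> Suc N \<and> atoms d \<subseteq> A}
          \<subseteq> Ident ` A \<union> LeftP ` ?B \<union> case_prod RightP ` (?B \<times> ?B)"
  proof
    fix d assume "d \<in> {d. size d \<le> Suc N \<and> atoms d \<subseteq> A}"
    then show "d \<in> Ident ` A \<union> LeftP ` ?B \<union> case_prod RightP ` (?B \<times> ?B)"
      by (cases d) auto
  qed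
  moreover have "finite ?B" using Suc by blast
  ultimately show ?case using Suc.prems by (meson finite_SigmaI finite_Un finite_imageI finite_subset)
qed

lemma finite_valid_fr: "finite {d. valid d \<and> fr (succedent d) = xs}"
proof (rule finite_subset)
  show "{d. valid d \<and> fr (succedent d) = xs} \<subseteq> {d. size d \<le> 3 * length xs \<and> atoms d \<subseteq> set xs}"
    using size_antecedent_bound atoms_subset_fr_succedent by fastforce
qed (simp add: finite_size_atoms)

lemma length_antecedent_LeftP:
  "2 \<le> length (antecedent d) \<Longrightarrow> length (antecedent (LeftP d)) = length (antecedent d) - 1"
  by (auto split: prod.splits)

lemma succedent_LeftP_power: "succedent ((LeftP ^^ j) d) = succedent d"
  by (induction j) (auto split: prod.splits)

lemma valid_LeftP_power:
  assumes "valid d" and "j < length (antecedent d)"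
  shows "valid ((LeftP ^^ j) d) \<and> length (antecedent ((LeftP ^^ j) d)) = length (antecedent d) - j"
  using assms(2)
proof (induction j)
  case (Suc j)
  then show ?case using length_antecedent_LeftP[of "(LeftP ^^ j) d"] by auto
qed (simp add: assms(1))

lemma irreducible_antecedent_iff:
  assumes "valid d"
  shows "irreducible (antecedent d) \<longleftrightarrow> (\<forall>e. d \<noteq> LeftP e)"
proof (cases d)
  case (RightP d1 d2)
  with assms have "irreducible (antecedent d1)" "antecedent d1 \<noteq> []"
    using antecedent_nonempty by auto
  then show ?thesis using RightP by (auto simp: irreducible_def split: prod.splits)
qed (auto simp: irreducible_def split: prod.splits)

fun strip_left :: "deriv \<Rightarrow> deriv" where
  "strip_left (LeftP d) = strip_left d"
| "strip_left d = d"

fun left_depth :: "deriv \<Rightarrow> nat" where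
  "left_depth (LeftP d) = Suc (left_depth d)"
| "left_depth d = 0"

lemma strip_left_not_LeftP: "strip_left d \<noteq> LeftP e"
  by (induction d rule: strip_left.induct) auto

lemma strip_left_id: "\<forall>e. d \<noteq> LeftP e \<Longrightarrow> strip_left d = d"
  by (cases d) auto

lemma strip_left_LeftP_power: "strip_left ((LeftP ^^ j) d) = strip_left d"
  by (induction j) auto

lemma valid_strip_left:
  "valid d \<Longrightarrow> valid (strip_left d) \<and> d = (LeftP ^^ left_depth d) (strip_left d)
     \<and> length (antecedent (strip_left d)) = length (antecedent d) + left_depth d"
proof (induction d)
  case (LeftP d)
  then show ?case using length_antecedent_LeftP[of d] by auto
qed auto

definition left_close :: "deriv \<Rightarrow> deriv" where
  "left_close d = (LeftP ^^ (length (antecedent d) - 1)) d"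

lemma bij_betw_left_close:
  "bij_betw left_close
     {d. valid d \<and> P (succedent d) \<and> irreducible (antecedent d)}
     {d. valid d \<and> P (succedent d) \<and> length (antecedent d) = 1}"
proof (rule bij_betw_byWitness[where f' = strip_left])
  show "\<forall>d \<in> {d. valid d \<and> P (succedent d) \<and> irreducible (antecedent d)}.
          strip_left (left_close d) = d"
    using irreducible_antecedent_iff
    by (auto simp: left_close_def strip_left_LeftP_power strip_left_id)
  show "\<forall>d \<in> {d. valid d \<and> P (succedent d) \<and> length (antecedent d) = 1}.
          left_close (strip_left d) = d"
    using valid_strip_left by (auto simp: left_close_def)
  show "left_close ` {d. valid d \<and> P (succedent d) \<and> irreducible (antecedent d)}
          \<subseteq> {d. valid d \<and> P (succedent d) \<and> length (antecedent d) = 1}"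
  proof clarify
    fix d assume "valid d" "P (succedent d)"
    moreover have "length (antecedent d) - 1 < length (antecedent d)"
      using antecedent_nonempty[OF \<open>valid d\<close>] by simp
    ultimately show "valid (left_close d) \<and> P (succedent (left_close d))
        \<and> length (antecedent (left_close d)) = 1"
      using valid_LeftP_power antecedent_nonempty
      by (simp add: left_close_def succedent_LeftP_power Suc_leI)
  qed
  show "strip_left ` {d. valid d \<and> P (succedent d) \<and> length (antecedent d) = 1}
          \<subseteq> {d. valid d \<and> P (succedent d) \<and> irreducible (antecedent d)}"
  proof clarify
    fix d assume d: "valid d" "P (succedent d)"
    then have "valid (strip_left d)" "succedent (strip_left d) = succedent d"
      using valid_strip_left succedent_LeftP_power by metis+
    with d show "valid (strip_left d) \<and> P (succedent (strip_left d))
        \<and> irreducible (antecedent (strip_left d))"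
      using irreducible_antecedent_iff strip_left_not_LeftP by auto
  qed
qed

lemma suminf_card_fibres:
  fixes f :: "'a \<Rightarrow> nat"
  assumes "finite S"
  shows "(\<Sum>k. card {x \<in> S. f x = k}) = card S"
proof -
  have "(\<Sum>k. card {x \<in> S. f x = k}) = (\<Sum>k \<in> f ` S. card {x \<in> S. f x = k})"
  proof (rule suminf_finite)
    fix k assume "k \<notin> f ` S"
    then have "{x \<in> S. f x = k} = {}" by blast
    then show "card {x \<in> S. f x = k} = 0" by (simp only: card.empty)
  qed (simp add: assms)
  also have "\<dots> = (\<Sum>x \<in> S. 1)"
    unfolding card_eq_sum by (rule sum.group[OF assms finite_imageI[OF assms] subset_refl])
  also have "\<dots> = card S"
    by simp
  finally show ?thesis .
qed

theorem proposition3p3: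
  shows "\<forall>n. ell n 1 = (\<Sum>k. rr n k)"
proof
  fix n
  let ?P = "\<lambda>C. fsize C = n \<and> fr C = [0..<Suc n]"
  let ?R = "{d. valid d \<and> ?P (succedent d) \<and> irreducible (antecedent d)}"
  have "finite ?R"
    by (rule finite_subset[OF _ finite_valid_fr[of "[0..<Suc n]"]]) auto
  have "(\<Sum>k. rr n k) = (\<Sum>k. card {d \<in> ?R. length (antecedent d) = k})"
    unfolding rr_def by (intro arg_cong[where f = suminf] ext arg_cong[where f = card]) auto
  also have "\<dots> = card ?R"
    using \<open>finite ?R\<close> by (rule suminf_card_fibres)
  also have "\<dots> = card {d. valid d \<and> ?P (succedent d) \<and> length (antecedent d) = 1}"
    by (rule bij_betw_same_card[OF bij_betw_left_close])
  also have "\<dots> = ell n 1"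
    unfolding ell_def by (rule arg_cong[where f = card]) auto
  finally show "ell n 1 = (\<Sum>k. rr n k)" ..
qed

end
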